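(* Let $Y\sim N(\theta,1)$ with $\theta\in\mathbb{R}$, let $a>0$ and $\nu_a=\mathbb{E}(Z^2\mid|Z|\ge a)$ for $Z\sim N(0,1)$. Let $A=(Y^2-\nu_a)\mathbb{1}(|Y|\ge a)$ and $B=Y^2-1$. Then the distribution of $A-B$ is stochastically decreasing in $|\theta|$, i.e. if $|\theta|\le|\theta'|$ then $\mathbb{P}_{\theta'}(A-B\le t)\ge\mathbb{P}_{\theta}(A-B\le t)$ for all $t\in\mathbb{R}$. *)

theory Defs
  imports "HOL-Probability.Probability"
begin

definition normal_law :: "real \<Rightarrow> real measure" where
  "normal_law \<theta> = density lborel (normal_density \<theta> 1)"

definition nu :: "real \<Rightarrow> real" where
  "nu a = (\<integral>z. indicator {z. a \<le> \<bar>z\<bar>} z * z\<^sup>2 \<partial>normal_law 0)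
          / measure (normal_law 0) {z. a \<le> \<bar>z\<bar>}"

definition A_stat :: "real \<Rightarrow> real \<Rightarrow> real" where
  "A_stat a y = (y\<^sup>2 - nu a) * indicator {z. a \<le> \<bar>z\<bar>} y"

definition B_stat :: "real \<Rightarrow> real" where
  "B_stat y = y\<^sup>2 - 1"

end

theory Submission
  imports Defs
begin

text \<open>Since \<open>\<nu>\<^sub>a \<ge> a\<^sup>2\<close>, the difference \<open>A - B\<close> equals \<open>1 - \<nu>\<^sub>a\<close> on \<open>|y| \<ge> a\<close> and
  \<open>1 - y\<^sup>2 > 1 - \<nu>\<^sub>a\<close> on \<open>|y| < a\<close>. Hence each sublevel set of \<open>A - B\<close> is empty, all of \<open>\<real>\<close>,
  or a symmetric tail \<open>{|y| \<ge> c}\<close>. The probability \<open>\<Phi>(c - \<theta>) - \<Phi>(-c - \<theta>)\<close> of the complementary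
  interval is even in \<open>\<theta>\<close> and, since the standard normal density is larger at \<open>c - \<theta>\<close> than
  at \<open>-c - \<theta>\<close>, decreasing for \<open>\<theta> \<ge> 0\<close>.\<close>

lemma prob_space_normal_law: "prob_space (normal_law \<theta>)"
  unfolding normal_law_def by (rule prob_space_normal_density) simp

lemma space_normal_law [simp]: "space (normal_law \<theta>) = UNIV"
  and sets_normal_law [simp]: "sets (normal_law \<theta>) = sets borel"
  by (auto simp: normal_law_def)

lemma normal_density_unit_variance: "normal_density \<theta> 1 y = std_normal_density (y - \<theta>)"
  by (simp add: normal_density_def)

lemma measure_normal_law:
  assumes "A \<in> sets borel"
  shows "measure (normal_law \<theta>) A = (\<integral>x. normal_density \<theta> 1 x * indicator A x \<partial>lborel)"
proof -
  have "measure (normal_law \<theta>) A = integral\<^sup>L (normal_law \<theta>) (indicator A)"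
    by (simp add: normal_law_def)
  also have "\<dots> = (\<integral>x. normal_density \<theta> 1 x * indicator A x \<partial>lborel)"
    unfolding normal_law_def using assms by (intro integral_real_density) auto
  finally show ?thesis .
qed

definition std_normal_antideriv :: "real \<Rightarrow> real" where
  "std_normal_antideriv u = (LBINT y=0..u. std_normal_density y)"

lemma has_real_derivative_std_normal_antideriv:
  "(std_normal_antideriv has_real_derivative std_normal_density x) (at x)"
proof -
  let ?l = "min 0 x - 1" and ?u = "max 0 x + 1"
  have "continuous_on {?l..?u} std_normal_density"
    unfolding normal_density_def by (intro continuous_intros) auto
  then have "((\<lambda>u. LBINT y=0..u. std_normal_density y) has_vector_derivative std_normal_density x)
      (at x within {?l..?u})"
    using interval_integral_FTC2[of ?l 0 ?u std_normal_density x] by (simp flip: zero_ereal_def)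
  then have "(std_normal_antideriv has_vector_derivative std_normal_density x) (at x within {?l<..<?u})"
    unfolding std_normal_antideriv_def[abs_def]
    by (rule has_vector_derivative_within_subset) auto
  then have "(std_normal_antideriv has_vector_derivative std_normal_density x) (at x)"
    by (subst (asm) has_vector_derivative_within_open) auto
  then show ?thesis
    by (simp add: has_real_derivative_iff_has_vector_derivative)
qed

lemma std_normal_antideriv_0 [simp]: "std_normal_antideriv 0 = 0"
  unfolding std_normal_antideriv_def zero_ereal_def by (rule interval_integral_endpoints_same)

lemmas std_normal_antideriv_chain = DERIV_chain2[OF has_real_derivative_std_normal_antideriv]

lemma std_normal_antideriv_minus: "std_normal_antideriv (- u) = - std_normal_antideriv u"
proof -
  have "((\<lambda>u. std_normal_antideriv u + std_normal_antideriv (- u)) has_real_derivative 0) (at x)"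
    for x
  proof -
    have "((\<lambda>u. std_normal_antideriv u + std_normal_antideriv (- u)) has_real_derivative
        std_normal_density x + std_normal_density (- x) * (- 1)) (at x)"
      by (rule DERIV_add[OF has_real_derivative_std_normal_antideriv
            std_normal_antideriv_chain[OF DERIV_minus[OF DERIV_ident]]])
    then show ?thesis
      by (simp add: normal_density_def)
  qed
  then have "std_normal_antideriv u + std_normal_antideriv (- u) =
      std_normal_antideriv 0 + std_normal_antideriv (- 0)"
    using DERIV_isconst_all by blast
  then show ?thesis
    by simp
qed

lemma measure_normal_law_greaterThanLessThan:
  assumes "l \<le> u"
  shows "measure (normal_law \<theta>) {l<..<u} =
    std_normal_antideriv (u - \<theta>) - std_normal_antideriv (l - \<theta>)"
proof -
  have "measure (normal_law \<theta>) {l<..<u} = (\<integral>x. normal_density \<theta> 1 x * indicator {l<..<u} x \<partial>lborel)"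
    by (rule measure_normal_law) simp
  also have "\<dots> = (LBINT x=l..u. normal_density \<theta> 1 x)"
    using assms
    by (simp add: interval_lebesgue_integral_def set_lebesgue_integral_def mult.commute)
  also have "\<dots> = std_normal_antideriv (u - \<theta>) - std_normal_antideriv (l - \<theta>)"
  proof (rule interval_integral_FTC_finite)
    show "continuous_on {min l u..max l u} (normal_density \<theta> 1)"
      unfolding normal_density_def by (intro continuous_intros) auto
    fix x
    have "((\<lambda>x. std_normal_antideriv (x - \<theta>)) has_real_derivative std_normal_density (x - \<theta>) * 1) (at x)"
      by (rule std_normal_antideriv_chain) (auto intro!: derivative_eq_intros)
    then show "((\<lambda>x. std_normal_antideriv (x - \<theta>)) has_vector_derivative normal_density \<theta> 1 x)
        (at x within {min l u..max l u})"
      unfolding normal_density_unit_variance[of \<theta> x]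
      by (simp add: has_real_derivative_iff_has_vector_derivative has_vector_derivative_at_within)
  qed
  finally show ?thesis .
qed

lemma std_normal_density_antimono_abs:
  assumes "\<bar>u\<bar> \<le> \<bar>v\<bar>"
  shows "std_normal_density v \<le> std_normal_density u"
proof -
  have "u\<^sup>2 \<le> v\<^sup>2"
    using assms by (simp add: abs_le_square_iff)
  then show ?thesis
    unfolding std_normal_density_def by (intro mult_left_mono) auto
qed

lemma measure_normal_law_central:
  assumes "0 \<le> c"
  shows "measure (normal_law \<theta>) {-c<..<c} =
    std_normal_antideriv (c - \<theta>) - std_normal_antideriv (- c - \<theta>)"
  using assms by (simp add: measure_normal_law_greaterThanLessThan)

lemma measure_normal_law_central_uminus:
  assumes "0 \<le> c"
  shows "measure (normal_law (- \<theta>)) {-c<..<c} = measure (normal_law \<theta>) {-c<..<c}"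
proof -
  have "std_normal_antideriv (c + \<theta>) = - std_normal_antideriv (- c - \<theta>)"
    and "std_normal_antideriv (- c + \<theta>) = - std_normal_antideriv (c - \<theta>)"
    using std_normal_antideriv_minus[of "c + \<theta>"] std_normal_antideriv_minus[of "- c + \<theta>"]
    by simp_all
  then show ?thesis
    using assms by (simp add: measure_normal_law_central)
qed

lemma measure_normal_law_central_antimono:
  assumes "0 \<le> c" and "0 \<le> \<theta>" and "\<theta> \<le> \<theta>'"
  shows "measure (normal_law \<theta>') {-c<..<c} \<le> measure (normal_law \<theta>) {-c<..<c}"
proof -
  let ?F = "\<lambda>\<theta>. std_normal_antideriv (c - \<theta>) - std_normal_antideriv (- c - \<theta>)"
  have "?F \<theta>' \<le> ?F \<theta>"
  proof (rule DERIV_nonpos_imp_nonincreasing[OF assms(3)])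
    fix x
    assume "\<theta> \<le> x"
    let ?D = "std_normal_density (c - x) * (- 1) - std_normal_density (- c - x) * (- 1)"
    have "(?F has_real_derivative ?D) (at x)"
      by (intro DERIV_diff std_normal_antideriv_chain) (auto intro!: derivative_eq_intros)
    moreover have "std_normal_density (- c - x) \<le> std_normal_density (c - x)"
      using assms \<open>\<theta> \<le> x\<close> by (intro std_normal_density_antimono_abs) auto
    ultimately show "\<exists>D. (?F has_real_derivative D) (at x) \<and> D \<le> 0"
      by auto
  qed
  then show ?thesis
    using assms(1) by (simp add: measure_normal_law_central)
qed

lemma measure_normal_law_central_abs_antimono:
  assumes "0 \<le> c" and "\<bar>\<theta>\<bar> \<le> \<bar>\<theta>'\<bar>"
  shows "measure (normal_law \<theta>') {-c<..<c} \<le> measure (normal_law \<theta>) {-c<..<c}"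
proof -
  have abs: "measure (normal_law \<bar>t\<bar>) {-c<..<c} = measure (normal_law t) {-c<..<c}" for t
    using measure_normal_law_central_uminus[OF assms(1), of t] by (cases "0 \<le> t") auto
  show ?thesis
    using measure_normal_law_central_antimono[OF assms(1) abs_ge_zero assms(2)]
    unfolding abs .
qed

lemma measure_normal_law_abs_ge_mono:
  assumes "0 \<le> c" and "\<bar>\<theta>\<bar> \<le> \<bar>\<theta>'\<bar>"
  shows "measure (normal_law \<theta>) {y. c \<le> \<bar>y\<bar>} \<le> measure (normal_law \<theta>') {y. c \<le> \<bar>y\<bar>}"
proof -
  have "measure (normal_law t) {y. c \<le> \<bar>y\<bar>} = 1 - measure (normal_law t) {-c<..<c}" for t
  proof -
    interpret prob_space "normal_law t"
      by (rule prob_space_normal_law)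
    have "{y. c \<le> \<bar>y\<bar>} = UNIV - {-c<..<c}"
      by auto
    then show ?thesis
      using prob_compl[of "{-c<..<c}"] by simp
  qed
  then show ?thesis
    using measure_normal_law_central_abs_antimono[OF assms] by simp
qed

lemma square_le_nu:
  assumes "0 < a"
  shows "a\<^sup>2 \<le> nu a"
proof -
  define E where "E = {z::real. a \<le> \<bar>z\<bar>}"
  have E: "E \<in> sets lborel"
    unfolding E_def by measurable
  interpret prob_space "normal_law 0"
    by (rule prob_space_normal_law)
  have "std_normal_antideriv a < std_normal_antideriv (a + 1)"
    by (rule DERIV_pos_imp_increasing)
      (auto intro!: exI has_real_derivative_std_normal_antideriv normal_density_pos)
  then have "0 < measure (normal_law 0) {a<..<a + 1}"
    by (simp add: measure_normal_law_greaterThanLessThan)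
  also have "\<dots> \<le> measure (normal_law 0) E"
    using E by (intro finite_measure_mono) (auto simp: E_def)
  finally have E_pos: "0 < measure (normal_law 0) E" .
  have "integrable lborel (\<lambda>z. indicator E z * (std_normal_density z * z ^ 2))"
    using integrable_mult_indicator[OF E integrable_std_normal_moment[of 2]] by simp
  then have int: "integrable (normal_law 0) (\<lambda>z. indicator E z * z\<^sup>2)"
    unfolding normal_law_def using E by (subst integrable_density) (auto simp: ac_simps)
  have "a\<^sup>2 * measure (normal_law 0) E = (\<integral>z. indicator E z * a\<^sup>2 \<partial>normal_law 0)"
    by simp
  also have "\<dots> \<le> (\<integral>z. indicator E z * z\<^sup>2 \<partial>normal_law 0)"
  proof (rule integral_mono[OF _ int])
    show "integrable (normal_law 0) (\<lambda>z. indicator E z * a\<^sup>2)"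
      using E by (simp add: less_top[symmetric])
    show "indicator E z * a\<^sup>2 \<le> indicator E z * z\<^sup>2" for z
      using assms by (auto simp: E_def indicator_def abs_le_square_iff[symmetric])
  qed
  finally show ?thesis
    using E_pos unfolding nu_def E_def by (simp add: pos_le_divide_eq)
qed

lemma A_stat_minus_B_stat:
  "A_stat a y - B_stat y = (if a \<le> \<bar>y\<bar> then 1 - nu a else 1 - y\<^sup>2)"
  by (simp add: A_stat_def B_stat_def)

lemma A_stat_minus_B_stat_sublevel_cases:
  assumes "0 < a"
  obtains "{y. A_stat a y - B_stat y \<le> t} = {}"
    | "{y. A_stat a y - B_stat y \<le> t} = UNIV"
    | c where "0 \<le> c" and "{y. A_stat a y - B_stat y \<le> t} = {y. c \<le> \<bar>y\<bar>}"
proof -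
  have nu: "a\<^sup>2 \<le> nu a"
    using square_le_nu[OF assms] .
  consider "t < 1 - nu a" | "1 - nu a \<le> t" "1 \<le> t" | "1 - nu a \<le> t" "t < 1"
    by linarith
  then show ?thesis
  proof cases
    case 1
    have "t < A_stat a y - B_stat y" for y
    proof (cases "a \<le> \<bar>y\<bar>")
      case False
      then have "y\<^sup>2 < a\<^sup>2"
        using abs_le_square_iff[of a y] assms by auto
      with 1 nu False show ?thesis
        by (simp add: A_stat_minus_B_stat)
    qed (use 1 in \<open>simp add: A_stat_minus_B_stat\<close>)
    then have "{y. A_stat a y - B_stat y \<le> t} = {}"
      by (auto simp: not_le[symmetric])
    then show ?thesis ..
  next
    case 2
    have "1 - y\<^sup>2 \<le> t" for y
      using 2(2) zero_le_power2[of y] by linarith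
    with 2(1) have "{y. A_stat a y - B_stat y \<le> t} = UNIV"
      by (auto simp: A_stat_minus_B_stat)
    then show ?thesis ..
  next
    case 3
    define c where "c = min a (sqrt (1 - t))"
    have "A_stat a y - B_stat y \<le> t \<longleftrightarrow> c \<le> \<bar>y\<bar>" for y
    proof -
      have "sqrt (1 - t) \<le> \<bar>y\<bar> \<longleftrightarrow> 1 - t \<le> y\<^sup>2"
        using real_sqrt_le_iff[of "1 - t" "y\<^sup>2"] by simp
      then show ?thesis
        using 3(1) by (auto simp: A_stat_minus_B_stat c_def min_le_iff_disj)
    qed
    then have "{y. A_stat a y - B_stat y \<le> t} = {y. c \<le> \<bar>y\<bar>}"
      by simp
    moreover have "0 \<le> c"
      using assms 3 by (simp add: c_def)
    ultimately show ?thesis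
      using that(3) by blast
  qed
qed

theorem lemma8:
  fixes a \<theta> \<theta>' t :: real
  assumes "a > 0" and "\<bar>\<theta>\<bar> \<le> \<bar>\<theta>'\<bar>"
  shows "measure (normal_law \<theta>') {y. A_stat a y - B_stat y \<le> t}
           \<ge> measure (normal_law \<theta>) {y. A_stat a y - B_stat y \<le> t}"
  using assms(1)
proof (cases rule: A_stat_minus_B_stat_sublevel_cases[where t = t])
  case 2
  then show ?thesis
    using prob_space.prob_space[OF prob_space_normal_law] by simp
next
  case (3 c)
  then show ?thesis
    using measure_normal_law_abs_ge_mono[OF _ assms(2)] by simp
qed simp

end
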